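(* Let $(x^*,y^* )$ be an optimal solution of the LP relaxation of forest cover, $G^*$ the subgraph with vertex set $\{i: x^*_i>0\}$ and edge set $\{(i,j): y^*_{ij}>0\}$, and $C=(V_C,E_C)$ a connected component of $G^*$ with at least one edge. Let $e_1,\dots,e_{|E_C|}$ be the edges of $C$ in the order (nondecreasing weight) in which Kruskal's algorithm considers them when computing the minimum spanning tree $M$ of $C$, and let $T$ be the tree obtained from $M$ by deleting every degree-one vertex $i$ of $M$ with $x^*_i<1/2$ together with its incident edge. For $1\le r\le|E_C|$ let $H_r$ be the graph with edge set $E_{H_r}=\{e_1,\dots,e_r\}$ and vertex set $V_{H_r}$ the endpoints of these edges, with connected components $S^1_r,\dots,S^k_r$, and let $T^f_r$ be the graph whose edges $E_{T^f_r}$ are the edges of $S^f_r$ belonging to $T$ and whose vertices $V_{T^f_r}$ are their endpoints. Then $$\sum_{i\in V_{H_r}}x^*_i-\sum_{(i,j)\in E_{H_r}}y^*_{ij}\;\ge\;\sum_{f=1}^k\big(|V_{T^f_r}|-|E_{T^f_r}|\big).$$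
   Context: Graph $G=(V,E)$ with edge weights $w:E\to[0,1]$. For $S\subseteq V$, $E(S)$ denotes the edges with both endpoints in $S$. The LP relaxation of forest cover: minimize $\sum_{i\in V}x_i-\sum_{(i,j)\in E}y_{ij}(1-w_{ij})$ subject to $x_i+x_j\ge1$ and $x_i\ge y_{ij}$, $x_j\ge y_{ij}$ for all $(i,j)\in E$; $\sum_{i\in S}x_i-\sum_{(i,j)\in E(S)}y_{ij}\ge1$ for all $S\subseteq V$ with $E(S)\ne\emptyset$; $0\le x,y\le1$. *)

theory Defs
  imports Complex_Main
begin

definition simple_graph :: "'a set \<Rightarrow> 'a set set \<Rightarrow> bool" where
  "simple_graph V E \<longleftrightarrow> finite V \<and> (\<forall>e\<in>E. card e = 2 \<and> e \<subseteq> V)"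

definition edges_in :: "'a set set \<Rightarrow> 'a set \<Rightarrow> 'a set set" where
  "edges_in E S = {e \<in> E. e \<subseteq> S}"

definition adj :: "'a set set \<Rightarrow> 'a \<Rightarrow> 'a \<Rightarrow> bool" where
  "adj F u v \<longleftrightarrow> {u, v} \<in> F"

definition conn :: "'a set set \<Rightarrow> 'a \<Rightarrow> 'a \<Rightarrow> bool" where
  "conn F u v \<longleftrightarrow> (adj F)\<^sup>*\<^sup>* u v"

definition verts_of :: "'a set set \<Rightarrow> 'a set" where
  "verts_of F = \<Union>F"

definition components :: "'a set \<Rightarrow> 'a set set \<Rightarrow> 'a set set" where
  "components W F = {{v \<in> W. conn F u v} | u. u \<in> W}"

definition degree :: "'a set set \<Rightarrow> 'a \<Rightarrow> nat" where
  "degree F i = card {e \<in> F. i \<in> e}"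

definition lp_feasible :: "'a set \<Rightarrow> 'a set set \<Rightarrow> ('a \<Rightarrow> real) \<Rightarrow> ('a set \<Rightarrow> real) \<Rightarrow> bool" where
  "lp_feasible V E x y \<longleftrightarrow>
     (\<forall>e\<in>E. \<forall>i j. e = {i, j} \<longrightarrow> x i + x j \<ge> 1 \<and> x i \<ge> y e \<and> x j \<ge> y e) \<and>
     (\<forall>S. S \<subseteq> V \<and> edges_in E S \<noteq> {} \<longrightarrow> sum x S - sum y (edges_in E S) \<ge> 1) \<and>
     (\<forall>i\<in>V. 0 \<le> x i \<and> x i \<le> 1) \<and> (\<forall>e\<in>E. 0 \<le> y e \<and> y e \<le> 1)"

definition lp_obj :: "'a set \<Rightarrow> 'a set set \<Rightarrow> ('a set \<Rightarrow> real) \<Rightarrow> ('a \<Rightarrow> real) \<Rightarrow> ('a set \<Rightarrow> real) \<Rightarrow> real" where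
  "lp_obj V E w x y = sum x V - (\<Sum>e\<in>E. y e * (1 - w e))"

definition lp_optimal :: "'a set \<Rightarrow> 'a set set \<Rightarrow> ('a set \<Rightarrow> real) \<Rightarrow> ('a \<Rightarrow> real) \<Rightarrow> ('a set \<Rightarrow> real) \<Rightarrow> bool" where
  "lp_optimal V E w x y \<longleftrightarrow> lp_feasible V E x y \<and>
     (\<forall>x' y'. lp_feasible V E x' y' \<longrightarrow> lp_obj V E w x y \<le> lp_obj V E w x' y')"

definition kruskal_step :: "'a set set \<Rightarrow> 'a set \<Rightarrow> 'a set set" where
  "kruskal_step F e = (if \<exists>u v. e = {u, v} \<and> conn F u v then F else insert e F)"

definition kruskal :: "'a set list \<Rightarrow> 'a set set" where
  "kruskal es = foldl kruskal_step {} es"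

end

theory Submission
  imports Defs
begin

text \<open>Each component \<open>S\<close> of \<open>H\<^sub>r\<close> contains an edge of \<open>E\<close>, so the cut constraint of the LP
  gives \<open>x(S) - y(E(S)) \<ge> 1\<close>, and dropping the edges of \<open>E(S)\<close> outside \<open>H\<^sub>r\<close> only
  increases the left side because \<open>y \<ge> 0\<close>. On the other side, the graph \<open>T\<^sup>f\<^sub>r\<close> is connected:
  the edges Kruskal picks among \<open>e\<^sub>1, \<dots>, e\<^sub>r\<close> already connect every component of \<open>H\<^sub>r\<close>
  and belong to \<open>M\<close>, and a path along them between two kept vertices can avoid the deleted
  vertices, which are leaves of \<open>M\<close>. A connected graph has at most one vertex more than it
  has edges, so each summand on the right is at most 1. Only the feasibility of
  \<open>(x\<^sup>*, y\<^sup>*)\<close> is needed, and any edge order works.\<close>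

lemma conn_refl: "conn F u u"
  by (simp add: conn_def)

lemma conn_sym: "conn F u v \<Longrightarrow> conn F v u"
  unfolding conn_def
proof (induction rule: rtranclp_induct)
  case (step v w)
  then have "adj F w v"
    by (simp add: adj_def insert_commute)
  from this step.IH show ?case
    by (rule converse_rtranclp_into_rtranclp)
qed simp

lemma conn_trans: "conn F u v \<Longrightarrow> conn F v w \<Longrightarrow> conn F u w"
  unfolding conn_def by (rule rtranclp_trans)

lemma conn_edge: "{u, v} \<in> F \<Longrightarrow> conn F u v"
  unfolding conn_def by (rule r_into_rtranclp) (simp add: adj_def)

lemma conn_if_edges_conn:
  assumes "conn F u v" and "\<And>a b. {a, b} \<in> F \<Longrightarrow> conn G a b"
  shows "conn G u v"
  using assms(1) unfolding conn_def[of F]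
proof (induction rule: rtranclp_induct)
  case (step v w)
  then have "conn G v w"
    using assms(2) by (simp add: adj_def)
  with step.IH show ?case
    by (rule conn_trans)
qed (rule conn_refl)

lemma conn_mono: "conn F u v \<Longrightarrow> F \<subseteq> G \<Longrightarrow> conn G u v"
  by (erule conn_if_edges_conn) (auto intro: conn_edge)

lemma conn_edges_in:
  assumes "conn F u v" and "u \<in> S" and closed: "\<And>a b. {a, b} \<in> F \<Longrightarrow> a \<in> S \<Longrightarrow> b \<in> S"
  shows "conn (edges_in F S) u v"
proof -
  have "v \<in> S \<and> conn (edges_in F S) u v"
    using assms(1) unfolding conn_def[of F]
  proof (induction rule: rtranclp_induct)
    case base
    show ?case using \<open>u \<in> S\<close> by (simp add: conn_refl)
  next
    case (step v w)
    then have "{v, w} \<in> F" "v \<in> S"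
      by (simp_all add: adj_def)
    then have "{v, w} \<in> edges_in F S" "w \<in> S"
      using closed by (auto simp: edges_in_def)
    with step.IH show ?case
      by (blast intro: conn_trans conn_edge)
  qed
  then show ?thesis ..
qed

lemma conn_avoiding_leaves:
  assumes "conn K u v" and "\<not> P u" and "\<not> P v" and "finite K"
    and leaves: "\<And>i. P i \<Longrightarrow> degree K i \<le> 1"
    and kept: "\<And>e. e \<in> K \<Longrightarrow> \<forall>i\<in>e. \<not> P i \<Longrightarrow> e \<in> T"
  shows "conn T u v"
proof -
  have "(\<not> P v \<and> conn T u v) \<or> (P v \<and> (\<exists>w. \<not> P w \<and> conn T u w \<and> {w, v} \<in> K))"
    using assms(1) unfolding conn_def[of K]
  proof (induction rule: rtranclp_induct)
    case base
    show ?case using \<open>\<not> P u\<close> by (simp add: conn_refl)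
  next
    case (step v z)
    then have vz: "{v, z} \<in> K"
      by (simp add: adj_def)
    show ?case
    proof (cases "P v")
      case False
      with step.IH have "conn T u v" by blast
      with vz False show ?thesis
        using kept[OF vz] by (blast intro: conn_trans conn_edge)
    next
      case True
      with step.IH obtain w where w: "\<not> P w" "conn T u w" "{w, v} \<in> K"
        by blast
      \<comment> \<open>a leaf has only one incident edge, so the path must return to \<open>w\<close> or stay at \<open>v\<close>\<close>
      have "card {e \<in> K. v \<in> e} \<le> Suc 0"
        using leaves[OF True] by (simp add: degree_def)
      then have "{w, v} = {v, z}"
        using card_le_Suc0_iff_eq[of "{e \<in> K. v \<in> e}"] \<open>finite K\<close> w(3) vz by auto
      then have "z = w \<or> z = v"
        by (auto simp: doubleton_eq_iff)
      with w True show ?thesis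
        by blast
    qed
  qed
  with \<open>\<not> P v\<close> show ?thesis
    by blast
qed

definition conn_dist :: "'a set set \<Rightarrow> 'a \<Rightarrow> 'a \<Rightarrow> nat" where
  "conn_dist F u v = (LEAST n. (adj F ^^ n) u v)"

lemma conn_dist_parent:
  assumes "conn F u v" and "v \<noteq> u"
  obtains p where "{p, v} \<in> F" and "conn_dist F u p < conn_dist F u v"
proof -
  have "\<exists>n. (adj F ^^ n) u v"
    using assms(1) unfolding conn_def by (rule rtranclp_imp_relpowp)
  then have path: "(adj F ^^ conn_dist F u v) u v"
    unfolding conn_dist_def by (rule LeastI_ex)
  have "conn_dist F u v \<noteq> 0"
    using path \<open>v \<noteq> u\<close> by (intro notI) simp
  then obtain m where m: "conn_dist F u v = Suc m"
    using not0_implies_Suc by blast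
  with path obtain p where "(adj F ^^ m) u p" "adj F p v"
    by (metis relpowp_Suc_E)
  moreover from this(1) have "conn_dist F u p \<le> m"
    unfolding conn_dist_def by (rule Least_le)
  ultimately show ?thesis
    using that m by (simp add: adj_def)
qed

text \<open>Sending each vertex other than \<open>u\<close> to the edge towards its parent in a
  shortest-path tree from \<open>u\<close> is injective.\<close>

lemma card_verts_of_le_Suc_card:
  assumes "finite F" and connected: "\<forall>v\<in>verts_of F. conn F u v"
  shows "card (verts_of F) \<le> Suc (card F)"
proof -
  let ?d = "conn_dist F u"
  have "\<forall>v\<in>verts_of F - {u}. \<exists>p. {p, v} \<in> F \<and> ?d p < ?d v"
  proof
    fix v assume "v \<in> verts_of F - {u}"
    with connected obtain p where "{p, v} \<in> F" "?d p < ?d v"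
      by (blast elim: conn_dist_parent)
    then show "\<exists>p. {p, v} \<in> F \<and> ?d p < ?d v" by blast
  qed
  then obtain p where p: "\<And>v. v \<in> verts_of F - {u} \<Longrightarrow> {p v, v} \<in> F \<and> ?d (p v) < ?d v"
    by metis
  have "inj_on (\<lambda>v. {p v, v}) (verts_of F - {u})"
  proof (rule inj_onI)
    fix v v' assume v: "v \<in> verts_of F - {u}" and v': "v' \<in> verts_of F - {u}"
      and eq: "{p v, v} = {p v', v'}"
    show "v = v'"
    proof (rule ccontr)
      assume "v \<noteq> v'"
      with eq have "p v' = v" "p v = v'"
        by (auto simp: doubleton_eq_iff)
      with p[OF v] p[OF v'] have "?d v' < ?d v" "?d v < ?d v'"
        by simp_all
      then show False
        by simp
    qed
  qed
  moreover have "(\<lambda>v. {p v, v}) ` (verts_of F - {u}) \<subseteq> F"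
    using p by blast
  ultimately have "card (verts_of F - {u}) \<le> card F"
    using \<open>finite F\<close> by (rule card_inj_on_le)
  moreover have "card (verts_of F) \<le> Suc (card (verts_of F - {u}))"
    by (cases "card (verts_of F)") (simp_all add: card_Diff_singleton_if)
  ultimately show ?thesis
    by linarith
qed

lemma subset_foldl_kruskal_step: "F \<subseteq> foldl kruskal_step F L"
proof (induction L arbitrary: F)
  case (Cons e L)
  have "F \<subseteq> kruskal_step F e"
    by (auto simp: kruskal_step_def)
  with Cons.IH[of "kruskal_step F e"] show ?case
    by simp
qed simp

lemma foldl_kruskal_step_subset: "foldl kruskal_step F L \<subseteq> F \<union> set L"
proof (induction L arbitrary: F)
  case (Cons e L)
  have "kruskal_step F e \<subseteq> insert e F"
    by (auto simp: kruskal_step_def)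
  with Cons.IH[of "kruskal_step F e"] show ?case
    by auto
qed simp

lemma conn_kruskal_step: "conn (kruskal_step F {a, b}) a b"
proof (cases "\<exists>u v. {a, b} = {u, v} \<and> conn F u v")
  case True
  then obtain u v where "{a, b} = {u, v}" "conn F u v"
    by blast
  then have "conn F a b"
    by (auto simp: doubleton_eq_iff intro: conn_sym)
  with True show ?thesis
    by (simp add: kruskal_step_def)
next
  case False
  then show ?thesis
    by (simp add: kruskal_step_def conn_edge)
qed

lemma conn_foldl_kruskal_step: "{a, b} \<in> set L \<Longrightarrow> conn (foldl kruskal_step F L) a b"
proof (induction L arbitrary: F)
  case (Cons e L)
  show ?case
  proof (cases "e = {a, b}")
    case True
    then show ?thesis
      using conn_mono[OF conn_kruskal_step subset_foldl_kruskal_step] by simp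
  next
    case False
    with Cons show ?thesis
      by simp
  qed
qed simp

lemma conn_kruskal: "conn (set L) u v \<Longrightarrow> conn (kruskal L) u v"
  unfolding kruskal_def by (erule conn_if_edges_conn) (rule conn_foldl_kruskal_step)

lemma kruskal_subset: "kruskal L \<subseteq> set L"
  using foldl_kruskal_step_subset[of "{}" L] by (simp add: kruskal_def)

lemma kruskal_take_subset: "kruskal (take r L) \<subseteq> kruskal L"
  using subset_foldl_kruskal_step[of "kruskal (take r L)" "drop r L"]
  by (simp add: kruskal_def flip: foldl_append)

definition conn_on :: "'a set \<Rightarrow> 'a set set \<Rightarrow> ('a \<times> 'a) set" where
  "conn_on W F = {(u, v). u \<in> W \<and> v \<in> W \<and> conn F u v}"

lemma equiv_conn_on: "equiv W (conn_on W F)"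
  by (rule equivI) (auto simp: conn_on_def refl_on_def sym_def trans_def
      intro: conn_refl conn_sym conn_trans)

lemma components_eq_quotient: "components W F = W // conn_on W F"
  by (auto simp: components_def quotient_def conn_on_def)

lemma conn_in_component: "S \<in> components W F \<Longrightarrow> u \<in> S \<Longrightarrow> v \<in> S \<Longrightarrow> conn F u v"
  using in_quotient_imp_in_rel[OF equiv_conn_on, of S W F u v]
  by (simp add: components_eq_quotient conn_on_def)

lemma edge_in_component:
  assumes "S \<in> components (verts_of F) F" and "{a, b} \<in> F" and "a \<in> S"
  shows "b \<in> S"
proof -
  have "(a, b) \<in> conn_on (verts_of F) F"
    using assms(2) by (auto simp: conn_on_def verts_of_def intro: conn_edge)
  with assms(1,3) show ?thesis
    unfolding components_eq_quotient by (rule in_quotient_imp_closed[OF equiv_conn_on])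
qed

lemma edges_in_component_nonempty:
  assumes S: "S \<in> components (verts_of F) F" and doubletons: "\<forall>e\<in>F. \<exists>a b. e = {a, b}"
  shows "edges_in F S \<noteq> {}"
proof -
  have "S \<noteq> {}" "S \<subseteq> verts_of F"
    using S in_quotient_imp_non_empty[OF equiv_conn_on] in_quotient_imp_subset[OF equiv_conn_on]
    unfolding components_eq_quotient by blast+
  then obtain e where "e \<in> F" and "e \<inter> S \<noteq> {}"
    unfolding verts_of_def by blast
  moreover obtain a b where ab: "e = {a, b}"
    using doubletons \<open>e \<in> F\<close> by blast
  ultimately have "a \<in> S \<or> b \<in> S" "{a, b} \<in> F" "{b, a} \<in> F"
    by (auto simp: insert_commute)
  then have "e \<subseteq> S"
    using edge_in_component[OF S] ab by blast
  with \<open>e \<in> F\<close> show ?thesis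
    by (auto simp: edges_in_def)
qed

lemma sum_over_components:
  fixes x :: "'a \<Rightarrow> 'b::ab_group_add" and y :: "'a set \<Rightarrow> 'b"
  assumes "finite F" and doubletons: "\<forall>e\<in>F. \<exists>a b. e = {a, b}"
  shows "sum x (verts_of F) - sum y F
           = (\<Sum>S\<in>components (verts_of F) F. sum x S - sum y (edges_in F S))"
proof -
  let ?C = "components (verts_of F) F"
  have equiv: "equiv (verts_of F) (conn_on (verts_of F) F)"
    by (rule equiv_conn_on)
  have "finite (verts_of F)"
    using assms unfolding verts_of_def by auto
  then have fin: "finite ?C" "\<forall>S\<in>?C. finite S"
    using in_quotient_imp_subset[OF equiv] finite_quotient[OF _ equiv_type[OF equiv]]
    unfolding components_eq_quotient by (auto intro: finite_subset)
  have disjoint: "S = S'" if "S \<in> ?C" "S' \<in> ?C" "u \<in> S" "u \<in> S'" for S S' u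
    using quotient_disj[OF equiv] that unfolding components_eq_quotient by blast
  have "sum x (verts_of F) = sum x (\<Union>?C)"
    unfolding components_eq_quotient Union_quotient[OF equiv] ..
  also have "\<dots> = (\<Sum>S\<in>?C. sum x S)"
    using fin disjoint by (subst sum.Union_disjoint) auto
  finally have vertices: "sum x (verts_of F) = (\<Sum>S\<in>?C. sum x S)" .
  have "F = (\<Union>S\<in>?C. edges_in F S)"
  proof (intro equalityI subsetI)
    fix e assume "e \<in> F"
    then obtain a b where ab: "e = {a, b}"
      using doubletons by blast
    with \<open>e \<in> F\<close> have a: "a \<in> verts_of F"
      by (auto simp: verts_of_def)
    let ?S = "conn_on (verts_of F) F `` {a}"
    have "?S \<in> ?C" "a \<in> ?S"
      using a equiv_class_self[OF equiv] quotientI unfolding components_eq_quotient by auto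
    then have "e \<subseteq> ?S"
      using edge_in_component[of ?S F a b] \<open>e \<in> F\<close> ab by auto
    with \<open>?S \<in> ?C\<close> \<open>e \<in> F\<close> show "e \<in> (\<Union>S\<in>?C. edges_in F S)"
      by (auto simp: edges_in_def)
  qed (auto simp: edges_in_def)
  moreover have "edges_in F S \<inter> edges_in F S' = {}" if "S \<in> ?C" "S' \<in> ?C" "S \<noteq> S'" for S S'
  proof (rule ccontr)
    assume "edges_in F S \<inter> edges_in F S' \<noteq> {}"
    then obtain e where "e \<in> F" "e \<subseteq> S" "e \<subseteq> S'"
      by (auto simp: edges_in_def)
    moreover obtain a b where "e = {a, b}"
      using doubletons \<open>e \<in> F\<close> by blast
    ultimately show False
      using disjoint[of S S' a] that by blast
  qed
  moreover have "\<forall>S\<in>?C. finite (edges_in F S)"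
    using \<open>finite F\<close> by (simp add: edges_in_def)
  ultimately have "sum y F = (\<Sum>S\<in>?C. sum y (edges_in F S))"
    using sum.UNION_disjoint[OF fin(1)] by metis
  with vertices show ?thesis
    by (simp add: sum_subtractf)
qed

lemma lp_feasible_edges_in_ge_1:
  assumes "lp_feasible V E x y" and "finite E" and "F \<subseteq> E" and "S \<subseteq> V"
    and "edges_in F S \<noteq> {}"
  shows "1 \<le> sum x S - sum y (edges_in F S)"
proof -
  have cut: "\<forall>S. S \<subseteq> V \<and> edges_in E S \<noteq> {} \<longrightarrow> 1 \<le> sum x S - sum y (edges_in E S)"
    and y_nonneg: "\<forall>e\<in>E. 0 \<le> y e"
    using assms(1) unfolding lp_feasible_def by blast+
  have "edges_in E S \<noteq> {}"
    using assms(3,5) by (auto simp: edges_in_def)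
  with cut \<open>S \<subseteq> V\<close> have "1 \<le> sum x S - sum y (edges_in E S)"
    by blast
  moreover have "sum y (edges_in F S) \<le> sum y (edges_in E S)"
    using y_nonneg assms(2,3) by (intro sum_mono2) (auto simp: edges_in_def)
  ultimately show ?thesis
    by linarith
qed

lemma card_verts_pruned_component_le:
  assumes "finite M" and "K \<subseteq> F" and "K \<subseteq> M"
    and spanning: "\<And>u v. conn F u v \<Longrightarrow> conn K u v"
    and leaves: "\<And>i. P i \<Longrightarrow> degree M i \<le> 1"
    and S: "S \<in> components (verts_of F) F"
  defines "T \<equiv> edges_in (F \<inter> {e \<in> M. \<forall>i\<in>e. \<not> P i}) S"
  shows "card (verts_of T) \<le> Suc (card T)"
proof (cases "verts_of T = {}")
  case False
  then obtain u where u: "u \<in> verts_of T"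
    by blast
  have T_verts: "v \<in> S \<and> \<not> P v" if "v \<in> verts_of T" for v
    using that by (auto simp: T_def edges_in_def verts_of_def)
  have "finite K"
    using \<open>finite M\<close> \<open>K \<subseteq> M\<close> by (rule finite_subset[rotated])
  have leaves_K: "degree K i \<le> 1" if "P i" for i
  proof -
    have "degree K i \<le> degree M i"
      unfolding degree_def using \<open>finite M\<close> \<open>K \<subseteq> M\<close> by (intro card_mono) auto
    with leaves[OF that] show ?thesis
      by simp
  qed
  have kept: "e \<in> F \<inter> {e \<in> M. \<forall>i\<in>e. \<not> P i}" if "e \<in> K" "\<forall>i\<in>e. \<not> P i" for e
    using that \<open>K \<subseteq> F\<close> \<open>K \<subseteq> M\<close> by blast
  have "conn T u v" if v: "v \<in> verts_of T" for v
    unfolding T_def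
  proof (rule conn_edges_in)
    show "conn (F \<inter> {e \<in> M. \<forall>i\<in>e. \<not> P i}) u v"
    proof (rule conn_avoiding_leaves[where P = P])
      show "conn K u v"
        using conn_in_component[OF S] T_verts[OF u] T_verts[OF v] by (blast intro: spanning)
    qed (use T_verts[OF u] T_verts[OF v] \<open>finite K\<close> leaves_K kept in auto)
  qed (use T_verts[OF u] edge_in_component[OF S] in blast)+
  moreover have "finite T"
    using \<open>finite M\<close> by (auto simp: T_def edges_in_def)
  ultimately show ?thesis
    by (blast intro: card_verts_of_le_Suc_card)
qed simp

theorem lemma6p3:
  fixes V :: "'a set" and E :: "'a set set" and w :: "'a set \<Rightarrow> real"
    and x :: "'a \<Rightarrow> real" and y :: "'a set \<Rightarrow> real"
    and VC :: "'a set" and es :: "'a set list" and r :: nat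
  assumes graph: "simple_graph V E"
    and weights: "\<forall>e\<in>E. 0 \<le> w e \<and> w e \<le> 1"
    and opt: "lp_optimal V E w x y"
    and comp: "VC \<in> components {i \<in> V. x i > 0} {e \<in> E. y e > 0}"
    and nonempty: "edges_in {e \<in> E. y e > 0} VC \<noteq> {}"
    and order: "distinct es" "set es = edges_in {e \<in> E. y e > 0} VC" "sorted (map w es)"
    and r: "1 \<le> r" "r \<le> length es"
  shows
    "let M = kruskal es;
         ET = {e \<in> M. \<forall>i\<in>e. \<not> (degree M i = 1 \<and> x i < 1/2)};
         EH = set (take r es);
         VH = verts_of EH
     in sum x VH - sum y EH \<ge>
        (\<Sum>S\<in>components VH EH.
           let ETf = {e \<in> edges_in EH S. e \<in> ET}
           in real (card (verts_of ETf)) - real (card ETf))"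
proof -
  define M where "M = kruskal es"
  define P where "P i \<longleftrightarrow> degree M i = 1 \<and> x i < 1/2" for i
  define EH where "EH = set (take r es)"
  define pruned where "pruned S = edges_in (EH \<inter> {e \<in> M. \<forall>i\<in>e. \<not> P i}) S" for S
  have "finite E"
    using graph finite_subset[of E "Pow V"] by (auto simp: simple_graph_def)
  have EH_E: "EH \<subseteq> E"
    using order(2) by (auto simp: EH_def edges_in_def dest: in_set_takeD)
  then have doubletons: "\<forall>e\<in>EH. \<exists>a b. e = {a, b}"
    using graph unfolding simple_graph_def by (metis card_2_iff subsetD)
  have component_bound: "real (card (verts_of (pruned S))) - real (card (pruned S))
      \<le> sum x S - sum y (edges_in EH S)" if S: "S \<in> components (verts_of EH) EH" for S
  proof -
    have "card (verts_of (pruned S)) \<le> Suc (card (pruned S))"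
      unfolding pruned_def
    proof (rule card_verts_pruned_component_le[where K = "kruskal (take r es)", OF _ _ _ _ _ S])
      show "finite M"
        using kruskal_subset unfolding M_def by (rule finite_subset) simp
    qed (auto simp: M_def P_def EH_def kruskal_subset kruskal_take_subset conn_kruskal)
    moreover have "S \<subseteq> V"
      using S EH_E graph by (auto simp: components_def verts_of_def simple_graph_def)
    then have "1 \<le> sum x S - sum y (edges_in EH S)"
      using opt \<open>finite E\<close> EH_E edges_in_component_nonempty[OF S doubletons]
      by (intro lp_feasible_edges_in_ge_1) (auto simp: lp_optimal_def)
    ultimately show ?thesis
      by linarith
  qed
  have "(\<Sum>S\<in>components (verts_of EH) EH. real (card (verts_of (pruned S))) - real (card (pruned S)))
      \<le> (\<Sum>S\<in>components (verts_of EH) EH. sum x S - sum y (edges_in EH S))"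
    by (rule sum_mono) (rule component_bound)
  also have "\<dots> = sum x (verts_of EH) - sum y EH"
    using doubletons by (simp add: sum_over_components EH_def)
  finally show ?thesis
    by (simp add: Let_def M_def P_def EH_def pruned_def edges_in_def Int_def conj_commute)
qed

end
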